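(* Let $A$ and $B$ be Young functions such that $B \ll A$ near infinity. Then there exists a Young function $C$ such that $B \ll C$ and $C \ll A$ near infinity.
   Context: A Young function is a convex function $A:[0,\infty)\to[0,\infty]$ with $A(0)=0$ which is neither identically $0$ nor identically $+\infty$. For Young functions $A,B$, one says that $B$ increases essentially more slowly than $A$ near infinity, written $B\ll A$, if $B$ is finite valued and $\lim_{t\to\infty} B(\lambda t)/A(t)=0$ for every $\lambda>0$. *)

theory Defs
  imports "HOL-Analysis.Analysis" "HOL-Library.Extended_Nonnegative_Real"
begin

(* Functions [0,\<infinity>) \<rightarrow> [0,\<infinity>] are modelled as real \<Rightarrow> ennreal; only values on [0,\<infinity>) matter. *)

definition young_function :: "(real \<Rightarrow> ennreal) \<Rightarrow> bool" where
  "young_function A \<longleftrightarrow>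
     (\<forall>s\<ge>0. \<forall>t\<ge>0. \<forall>\<mu>::real. 0 \<le> \<mu> \<and> \<mu> \<le> 1 \<longrightarrow>
        A (\<mu> * s + (1 - \<mu>) * t) \<le> ennreal \<mu> * A s + ennreal (1 - \<mu>) * A t)
     \<and> A 0 = 0
     \<and> \<not> (\<forall>t\<ge>0. A t = 0)
     \<and> \<not> (\<forall>t\<ge>0. A t = top)"

definition ess_slower :: "(real \<Rightarrow> ennreal) \<Rightarrow> (real \<Rightarrow> ennreal) \<Rightarrow> bool" where
  "ess_slower B A \<longleftrightarrow>
     (\<forall>t\<ge>0. B t < top) \<and>
     (\<forall>c::real. c > 0 \<longrightarrow> ((\<lambda>t. B (c * t) / A t) \<longlongrightarrow> 0) at_top)"

end

theory Submission
  imports Defs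
begin

text \<open>Choose thresholds \<open>S n\<close> beyond which \<open>B (n\<^sup>2 s) \<le> A s / n\<close>, and let \<open>C\<close> be the supremum
  of the ramps \<open>t \<mapsto> B (n \<cdot> max 0 (t - T n))\<close> with \<open>T n \<ge> max n (n \<cdot> S n)\<close>. Each ramp is convex,
  so \<open>C\<close> is a Young function, and \<open>C\<close> is finite because only the ramps with \<open>n < t\<close> are switched
  on at \<open>t\<close>. The \<open>n\<close>-th ramp eventually exceeds \<open>B (n t / 2)\<close>, whence \<open>B \<ll> C\<close>. At the point
  \<open>c t\<close> the ramps with \<open>n \<le> N\<close> are bounded by \<open>B (N c t)\<close>, and a later ramp is switched on only
  when \<open>t \<ge> S n\<close>, where it is at most \<open>A t / n\<close>; hence \<open>C \<ll> A\<close>.\<close>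

lemma divide_le_ennreal_iff:
  fixes x y :: ennreal
  assumes "e > 0"
  shows "x / y \<le> ennreal e \<longleftrightarrow> x \<le> ennreal e * y"
proof
  assume le: "x / y \<le> ennreal e"
  consider "y = 0" | "y = top" | "y \<noteq> 0" "y \<noteq> top" by blast
  then show "x \<le> ennreal e * y"
  proof cases
    case 1
    then show ?thesis using le by (cases "x = 0") (auto simp: top_unique)
  next
    case 2
    then show ?thesis using assms by (simp add: ennreal_mult_top)
  next
    case 3
    then have "x = x / y * y" by (simp add: ennreal_divide_times top.not_eq_extremum)
    also have "\<dots> \<le> ennreal e * y" using le by (rule mult_right_mono) simp
    finally show ?thesis .
  qed
next
  assume "x \<le> ennreal e * y"
  then show "x / y \<le> ennreal e"
    by (cases "y = 0") (auto intro!: divide_le_posI_ennreal simp: mult.commute zero_less_iff_neq_zero)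
qed

lemma tendsto_0_ennreal_iff:
  fixes f :: "'a \<Rightarrow> ennreal"
  shows "(f \<longlongrightarrow> 0) F \<longleftrightarrow> (\<forall>e>0. eventually (\<lambda>x. f x \<le> ennreal e) F)"
proof (intro iffI allI impI)
  fix e :: real assume "(f \<longlongrightarrow> 0) F" "e > 0"
  then have "eventually (\<lambda>x. f x < ennreal e) F" by (simp add: order_tendsto_iff)
  then show "eventually (\<lambda>x. f x \<le> ennreal e) F" by eventually_elim simp
next
  assume small: "\<forall>e>0. eventually (\<lambda>x. f x \<le> ennreal e) F"
  show "(f \<longlongrightarrow> 0) F"
  proof (rule order_tendstoI)
    fix a :: ennreal assume "0 < a"
    then obtain e where "0 < e" "ennreal e < a"
      by (metis dense ennreal_enn2real enn2real_positive_iff less_le_trans top_greatest)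
    moreover from \<open>0 < e\<close> small have "eventually (\<lambda>x. f x \<le> ennreal e) F" by blast
    ultimately show "eventually (\<lambda>x. f x < a) F" by (auto elim: eventually_mono)
  qed simp
qed

lemma tendsto_divide_0_ennreal_iff:
  fixes f g :: "'a \<Rightarrow> ennreal"
  shows "((\<lambda>x. f x / g x) \<longlongrightarrow> 0) F \<longleftrightarrow> (\<forall>e>0. eventually (\<lambda>x. f x \<le> ennreal e * g x) F)"
  by (simp add: tendsto_0_ennreal_iff divide_le_ennreal_iff)

lemma ess_slower_iff:
  "ess_slower B A \<longleftrightarrow> (\<forall>t\<ge>0. B t < top) \<and>
     (\<forall>c>0. \<forall>e>0. eventually (\<lambda>t. B (c * t) \<le> ennreal e * A t) at_top)"
  unfolding ess_slower_def tendsto_divide_0_ennreal_iff ..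

lemma young_function_zero: "young_function A \<Longrightarrow> A 0 = 0"
  unfolding young_function_def by blast

lemma young_function_convex:
  assumes "young_function A" "0 \<le> s" "0 \<le> t" "0 \<le> \<mu>" "\<mu> \<le> 1"
  shows "A (\<mu> * s + (1 - \<mu>) * t) \<le> ennreal \<mu> * A s + ennreal (1 - \<mu>) * A t"
  using assms unfolding young_function_def by blast

lemma young_function_scale:
  assumes "young_function A" "0 \<le> \<mu>" "\<mu> \<le> 1" "0 \<le> x"
  shows "A (\<mu> * x) \<le> ennreal \<mu> * A x"
  using young_function_convex[OF assms(1,4) order_refl assms(2,3)]
  by (simp add: young_function_zero[OF assms(1)])

lemma young_function_mono:
  assumes "young_function A" "0 \<le> s" "s \<le> t"
  shows "A s \<le> A t"
proof (cases "t = 0")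
  case True
  then show ?thesis using assms by simp
next
  case False
  then have "t > 0" using assms by simp
  then have "A s = A ((s / t) * t)" by simp
  also have "\<dots> \<le> ennreal (s / t) * A t"
    using young_function_scale[OF assms(1), of "s / t" t] assms \<open>t > 0\<close> by simp
  also have "\<dots> \<le> A t"
    using assms \<open>t > 0\<close> by (simp add: mult.commute mult_left_le)
  finally show ?thesis .
qed

lemma young_function_comp_convex:
  assumes "young_function A" "0 \<le> g s" "0 \<le> g t" "0 \<le> g (\<mu> * s + (1 - \<mu>) * t)"
    and "g (\<mu> * s + (1 - \<mu>) * t) \<le> \<mu> * g s + (1 - \<mu>) * g t" "0 \<le> \<mu>" "\<mu> \<le> 1"
  shows "A (g (\<mu> * s + (1 - \<mu>) * t)) \<le> ennreal \<mu> * A (g s) + ennreal (1 - \<mu>) * A (g t)"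
proof -
  have "A (g (\<mu> * s + (1 - \<mu>) * t)) \<le> A (\<mu> * g s + (1 - \<mu>) * g t)"
    using assms by (intro young_function_mono) auto
  also have "\<dots> \<le> ennreal \<mu> * A (g s) + ennreal (1 - \<mu>) * A (g t)"
    using assms by (intro young_function_convex) auto
  finally show ?thesis .
qed

lemma ess_slowerI_dominated:
  assumes "young_function B" "\<And>t. 0 \<le> t \<Longrightarrow> B t < top"
    and "\<And>k. k > 0 \<Longrightarrow> eventually (\<lambda>t. B (k * t) \<le> C t) at_top"
  shows "ess_slower B C"
  unfolding ess_slower_iff
proof (intro conjI allI impI)
  fix c e :: real assume "c > 0" "e > 0"
  define \<mu> where "\<mu> = min e 1"
  have \<mu>: "0 < \<mu>" "\<mu> \<le> 1" "\<mu> \<le> e" using \<open>e > 0\<close> unfolding \<mu>_def by auto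
  show "eventually (\<lambda>t. B (c * t) \<le> ennreal e * C t) at_top"
    using assms(3)[OF divide_pos_pos[OF \<open>c > 0\<close> \<open>\<mu> > 0\<close>]] eventually_ge_at_top[of 0]
  proof eventually_elim
    case (elim t)
    have "B (c * t) = B (\<mu> * (c / \<mu> * t))" using \<mu> by (simp add: field_simps)
    also have "\<dots> \<le> ennreal \<mu> * B (c / \<mu> * t)"
      using \<mu> \<open>c > 0\<close> elim by (intro young_function_scale[OF assms(1)]) auto
    also have "\<dots> \<le> ennreal e * C t"
      using \<mu> elim by (intro mult_mono ennreal_leI) auto
    finally show ?case .
  qed
qed (rule assms(2))

lemma ess_slower_thresholds:
  assumes "young_function B" "ess_slower B A"
  obtains S where "\<And>n s. S n \<le> s \<Longrightarrow> B (real n ^ 2 * s) \<le> ennreal (1 / real n) * A s"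
proof -
  have "eventually (\<lambda>s. B (real n ^ 2 * s) \<le> ennreal (1 / real n) * A s) at_top" for n
  proof (cases "n = 0")
    case True
    then show ?thesis using young_function_zero[OF assms(1)] by simp
  next
    case False
    then show ?thesis using assms(2) unfolding ess_slower_iff by simp
  qed
  then have "\<forall>n. \<exists>S. \<forall>s\<ge>S. B (real n ^ 2 * s) \<le> ennreal (1 / real n) * A s"
    by (simp add: eventually_at_top_linorder)
  then show ?thesis using that by metis
qed

definition ramp_sup :: "(real \<Rightarrow> ennreal) \<Rightarrow> (nat \<Rightarrow> real) \<Rightarrow> real \<Rightarrow> ennreal" where
  "ramp_sup B T t = (SUP n. B (real n * max 0 (t - T n)))"

lemma ramp_sup_upper: "B (real n * max 0 (t - T n)) \<le> ramp_sup B T t"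
  unfolding ramp_sup_def by (rule SUP_upper) simp

lemma ramp_convex:
  fixes a s t T \<mu> :: real
  assumes "0 \<le> a" "0 \<le> \<mu>" "\<mu> \<le> 1"
  shows "a * max 0 (\<mu> * s + (1 - \<mu>) * t - T)
           \<le> \<mu> * (a * max 0 (s - T)) + (1 - \<mu>) * (a * max 0 (t - T))"
proof -
  have "\<mu> * s + (1 - \<mu>) * t - T = \<mu> * (s - T) + (1 - \<mu>) * (t - T)" by algebra
  also have "\<dots> \<le> \<mu> * max 0 (s - T) + (1 - \<mu>) * max 0 (t - T)"
    using assms by (intro add_mono mult_left_mono) auto
  finally have "max 0 (\<mu> * s + (1 - \<mu>) * t - T) \<le> \<mu> * max 0 (s - T) + (1 - \<mu>) * max 0 (t - T)"
    using assms by simp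
  from mult_left_mono[OF this assms(1)] show ?thesis
    by (simp add: distrib_left mult.left_commute)
qed

lemma young_function_ramp_sup:
  assumes B: "young_function B" and T: "\<And>n. 0 \<le> T n"
  shows "young_function (ramp_sup B T)"
  unfolding young_function_def
proof (intro conjI allI impI)
  fix s t \<mu> :: real assume st: "0 \<le> s" "0 \<le> t" "0 \<le> \<mu> \<and> \<mu> \<le> 1"
  let ?C = "ramp_sup B T"
  show "?C (\<mu> * s + (1 - \<mu>) * t) \<le> ennreal \<mu> * ?C s + ennreal (1 - \<mu>) * ?C t"
    unfolding ramp_sup_def[of B T "\<mu> * s + (1 - \<mu>) * t"]
  proof (rule SUP_least)
    fix n
    have "B (real n * max 0 (\<mu> * s + (1 - \<mu>) * t - T n))
        \<le> ennreal \<mu> * B (real n * max 0 (s - T n)) + ennreal (1 - \<mu>) * B (real n * max 0 (t - T n))"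
      using young_function_comp_convex[OF B, where g = "\<lambda>x. real n * max 0 (x - T n)"]
        ramp_convex[of "real n" \<mu>] st by simp
    also have "\<dots> \<le> ennreal \<mu> * ?C s + ennreal (1 - \<mu>) * ?C t"
      by (intro add_mono mult_left_mono ramp_sup_upper) auto
    finally show "B (real n * max 0 (\<mu> * s + (1 - \<mu>) * t - T n)) \<le> \<dots>" .
  qed
next
  show C0: "ramp_sup B T 0 = 0"
    unfolding ramp_sup_def using T young_function_zero[OF B] by simp
  then show "\<not> (\<forall>t\<ge>0. ramp_sup B T t = top)" by auto
next
  obtain t0 where "0 \<le> t0" "B t0 \<noteq> 0" using B unfolding young_function_def by blast
  moreover have "B t0 \<le> ramp_sup B T (t0 + T 1)"
    using ramp_sup_upper[of B 1 "t0 + T 1" T] \<open>0 \<le> t0\<close> by simp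
  ultimately show "\<not> (\<forall>t\<ge>0. ramp_sup B T t = 0)"
    using T[of 1] by (metis add_nonneg_nonneg le_zero_eq)
qed

lemma young_function_ramp_le:
  assumes "young_function B" "0 \<le> a" "0 \<le> x" "0 \<le> T"
  shows "B (a * max 0 (x - T)) \<le> B (a * x)"
  using assms by (intro young_function_mono mult_left_mono) auto

lemma ramp_sup_finite:
  assumes B: "young_function B" "\<And>t. 0 \<le> t \<Longrightarrow> B t < top"
    and T: "\<And>n. real n \<le> T n" and "0 \<le> t"
  shows "ramp_sup B T t < top"
proof -
  define N where "N = nat \<lceil>t\<rceil>"
  have "B (real n * max 0 (t - T n)) \<le> B (real N * t)" for n
  proof (cases "t \<le> T n")
    case True
    then show ?thesis using young_function_zero[OF B(1)] by simp
  next
    case False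
    then have "real n \<le> real N" using T[of n] unfolding N_def by linarith
    then have "B (real n * max 0 (t - T n)) \<le> B (real N * max 0 (t - T n))"
      by (intro young_function_mono[OF B(1)] mult_right_mono) auto
    also have "\<dots> \<le> B (real N * t)"
      using T[of n] \<open>0 \<le> t\<close> by (intro young_function_ramp_le[OF B(1)]) auto
    finally show ?thesis .
  qed
  then have "ramp_sup B T t \<le> B (real N * t)" unfolding ramp_sup_def by (rule SUP_least)
  also have "\<dots> < top" using B(2) \<open>0 \<le> t\<close> by simp
  finally show ?thesis .
qed

lemma ramp_sup_dominates:
  assumes "young_function B" "0 \<le> k"
  shows "eventually (\<lambda>t. B (k * t) \<le> ramp_sup B T t) at_top"
proof -
  define n where "n = nat \<lceil>2 * k\<rceil>"
  have "2 * k \<le> real n" unfolding n_def by linarith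
  show ?thesis
    using eventually_ge_at_top[of "max 0 (2 * T n)"]
  proof eventually_elim
    case (elim t)
    have "k * t \<le> real n / 2 * t"
      using \<open>2 * k \<le> real n\<close> elim by (intro mult_right_mono) auto
    also have "\<dots> = real n * (t / 2)" by simp
    also have "\<dots> \<le> real n * max 0 (t - T n)" using elim by (intro mult_left_mono) auto
    finally have "B (k * t) \<le> B (real n * max 0 (t - T n))"
      using elim \<open>0 \<le> k\<close> by (intro young_function_mono[OF assms(1)]) auto
    also have "\<dots> \<le> ramp_sup B T t" by (rule ramp_sup_upper)
    finally show ?case .
  qed
qed

lemma ess_slower_ramp_sup:
  assumes "young_function B" "\<And>t. 0 \<le> t \<Longrightarrow> B t < top"
  shows "ess_slower B (ramp_sup B T)"
  using assms by (intro ess_slowerI_dominated ramp_sup_dominates) auto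

lemma ramp_sup_le_bound:
  assumes B: "young_function B"
    and S: "\<And>n s. S n \<le> s \<Longrightarrow> B (real n ^ 2 * s) \<le> ennreal (1 / real n) * A s"
    and T: "\<And>n. real n \<le> T n" "\<And>n. real n * S n \<le> T n"
    and N: "c \<le> real N" "1 / e \<le> real N"
    and "0 < c" "0 < e" "0 < t" and BN: "B (real N * c * t) \<le> ennreal e * A t"
  shows "ramp_sup B T (c * t) \<le> ennreal e * A t"
  unfolding ramp_sup_def
proof (rule SUP_least)
  fix n
  show "B (real n * max 0 (c * t - T n)) \<le> ennreal e * A t"
  proof (cases "c * t \<le> T n")
    case True
    then show ?thesis using young_function_zero[OF B] by simp
  next
    case False
    have piece: "B (real n * max 0 (c * t - T n)) \<le> B (real n * (c * t))"
      using T(1)[of n] \<open>0 < c\<close> \<open>0 < t\<close> by (intro young_function_ramp_le[OF B]) auto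
    show ?thesis
    proof (cases "n \<le> N")
      case True
      then have "B (real n * (c * t)) \<le> B (real N * c * t)"
        using \<open>0 < c\<close> \<open>0 < t\<close> by (intro young_function_mono[OF B]) (auto simp: mult.assoc)
      then show ?thesis using piece BN by order
    next
      case False
      then have n: "c \<le> real n" "1 / e \<le> real n" "0 < real n" using N \<open>0 < c\<close> by auto
      have "real n * S n < real n * t"
        using T(2)[of n] False \<open>\<not> c * t \<le> T n\<close> n(1) \<open>0 < t\<close> mult_right_mono[of c "real n" t]
        by linarith
      then have "S n \<le> t" using n(3) by simp
      have "B (real n * (c * t)) \<le> B (real n ^ 2 * t)"
        using n \<open>0 < c\<close> \<open>0 < t\<close>
        by (intro young_function_mono[OF B]) (auto simp: power2_eq_square mult.assoc)
      also have "\<dots> \<le> ennreal (1 / real n) * A t" using S[OF \<open>S n \<le> t\<close>] .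
      also have "\<dots> \<le> ennreal e * A t"
        using n(2,3) \<open>0 < e\<close> by (intro mult_right_mono ennreal_leI) (auto simp: field_simps)
      finally show ?thesis using piece by order
    qed
  qed
qed

lemma ramp_sup_ess_slower:
  assumes B: "young_function B" and BA: "ess_slower B A"
    and S: "\<And>n s. S n \<le> s \<Longrightarrow> B (real n ^ 2 * s) \<le> ennreal (1 / real n) * A s"
    and T: "\<And>n. real n \<le> T n" "\<And>n. real n * S n \<le> T n"
  shows "ess_slower (ramp_sup B T) A"
  unfolding ess_slower_iff
proof (intro conjI allI impI)
  fix t :: real assume "0 \<le> t"
  then show "ramp_sup B T t < top"
    using BA T(1) by (intro ramp_sup_finite[OF B]) (auto simp: ess_slower_iff)
next
  fix c e :: real assume "0 < c" "0 < e"
  define N where "N = nat \<lceil>max c (1 / e)\<rceil>"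
  have N: "c \<le> real N" "1 / e \<le> real N" unfolding N_def by linarith+
  then have "0 < real N * c" using \<open>0 < c\<close> by simp
  then have "eventually (\<lambda>t. B (real N * c * t) \<le> ennreal e * A t) at_top"
    using BA \<open>0 < e\<close> unfolding ess_slower_iff by blast
  then show "eventually (\<lambda>t. ramp_sup B T (c * t) \<le> ennreal e * A t) at_top"
    using eventually_gt_at_top[of 0]
    by eventually_elim (rule ramp_sup_le_bound[OF B S T N \<open>0 < c\<close> \<open>0 < e\<close>])
qed

theorem proposition2p6:
  fixes A B :: "real \<Rightarrow> ennreal"
  assumes "young_function A" and "young_function B" and "ess_slower B A"
  shows "\<exists>C. young_function C \<and> ess_slower B C \<and> ess_slower C A"
proof -
  obtain S where S: "\<And>n s. S n \<le> s \<Longrightarrow> B (real n ^ 2 * s) \<le> ennreal (1 / real n) * A s"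
    using ess_slower_thresholds[OF assms(2,3)] by blast
  define T where "T n = max (real n) (real n * S n)" for n
  have T: "real n \<le> T n" "real n * S n \<le> T n" "0 \<le> T n" for n
    unfolding T_def by auto
  have B_finite: "\<And>t. 0 \<le> t \<Longrightarrow> B t < top" using assms(3) unfolding ess_slower_def by blast
  show ?thesis
  proof (intro exI conjI)
    show "young_function (ramp_sup B T)" using young_function_ramp_sup[OF assms(2) T(3)] .
    show "ess_slower B (ramp_sup B T)" using ess_slower_ramp_sup[OF assms(2) B_finite] .
    show "ess_slower (ramp_sup B T) A" using ramp_sup_ess_slower[OF assms(2,3) S T(1,2)] .
  qed
qed

end
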